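(* Let $P$ be a finite set of points in the plane and let $f$ be a stacking order of $\mathcal{D}(P)$. Then $$\mathrm{vis}(\mathcal{D}(P),f)\ \ge\ \lim_{\varepsilon\to 0}\mathrm{vis}(\mathcal{D}(\varepsilon P),f),$$ where on the right-hand side $f$ denotes the corresponding stacking order of $\mathcal{D}(\varepsilon P)$.
   Context: For a point $p$ in the plane, $D(p)$ denotes the closed disk of radius $1$ centered at $p$, and for a finite point set $P$, $\mathcal{D}(P)=\{D(p): p\in P\}$. A stacking order of a finite collection $\mathcal{D}$ of $n$ distinct unit disks in the plane is a bijection $f:\mathcal{D}\to\{1,\dots,n\}$; $f(D)$ is regarded as the height ($z$-coordinate) of $D$, and the arrangement is viewed from below. A point $x$ on the boundary circle of $D\in\mathcal{D}$ is visible if $x$ does not lie in any disk $D'\in\mathcal{D}$ with $f(D')<f(D)$. The visible perimeter $\mathrm{vis}(\mathcal{D},f)$ is the total length of all visible boundary points, summed over all disks of $\mathcal{D}$. For $\varepsilon>0$ and a point $p=(x,y)$, $\varepsilon p=(\varepsilon x,\varepsilon y)$, and $\varepsilon P=\{\varepsilon p: p\in P\}$. A stacking order $f$ of $\mathcal{D}(P)$ is identified with the stacking order of $\mathcal{D}(\varepsilon P)$ given by $D(\varepsilon p)\mapsto f(D(p))$. *)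

theory Defs
  imports "HOL-Analysis.Analysis"
begin

text \<open>A stacking order of the disks D(p), p in P,
  is represented by a bijection f : P -> {1..card P} on the centres (disks with distinct
  centres are distinct). The boundary circle of D(p) is parametrised by t |-> p + cis t,
  t in [0, 2 pi); since the radius is 1, arc length equals Lebesgue measure of parameters.\<close>

definition stacking_order :: "complex set \<Rightarrow> (complex \<Rightarrow> nat) \<Rightarrow> bool" where
  "stacking_order P f \<longleftrightarrow> bij_betw f P {1..card P}"

definition visible :: "complex set \<Rightarrow> (complex \<Rightarrow> nat) \<Rightarrow> complex \<Rightarrow> complex \<Rightarrow> bool" where
  "visible P f p x \<longleftrightarrow> (\<forall>q\<in>P. f q < f p \<longrightarrow> x \<notin> cball q 1)"

definition vis :: "complex set \<Rightarrow> (complex \<Rightarrow> nat) \<Rightarrow> real" where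
  "vis P f = (\<Sum>p\<in>P. measure lborel {t \<in> {0..<2*pi}. visible P f p (p + cis t)})"

definition scale_pts :: "real \<Rightarrow> complex set \<Rightarrow> complex set" where
  "scale_pts \<epsilon> P = (\<lambda>p. of_real \<epsilon> * p) ` P"

definition scale_order :: "real \<Rightarrow> (complex \<Rightarrow> nat) \<Rightarrow> (complex \<Rightarrow> nat)" where
  "scale_order \<epsilon> f = (\<lambda>x. f (x / of_real \<epsilon>))"

end

theory Submission
  imports Defs
begin

text \<open>Seen from the centre of D(\<epsilon>p), the rescaled disk D(\<epsilon>q) has centre at distance
  \<epsilon>|p - q|, so the point of the circle of D(\<epsilon>p) at angle t is covered by D(\<epsilon>q) iff
  |\<epsilon>(p - q) + e^{it}| \<le> 1. Along the ray \<epsilon> \<mapsto> \<epsilon>(p - q) + e^{it}, which starts on the unit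
  circle, the closed unit disk is convex, so once the ray has left it, it never returns.
  Hence every visible arc grows with \<epsilon>, the visible perimeter is monotone in \<epsilon>, its limit
  at 0 exists, and it is bounded by the value at \<epsilon> = 1.\<close>

lemma norm_scaleR_add_gt_mono:
  fixes v w :: "'a::real_normed_vector"
  assumes "0 < a" "a \<le> b" "norm w < norm (a *\<^sub>R v + w)"
  shows "norm w < norm (b *\<^sub>R v + w)"
proof (rule ccontr)
  assume "\<not> norm w < norm (b *\<^sub>R v + w)"
  then have b_le: "norm (b *\<^sub>R v + w) \<le> norm w" by simp
  define t where "t = a / b"
  have t: "0 \<le> t" "t \<le> 1" using assms by (auto simp: t_def)
  have "a *\<^sub>R v + w = (1 - t) *\<^sub>R w + t *\<^sub>R (b *\<^sub>R v + w)"
    using assms by (simp add: t_def algebra_simps)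
  also have "norm \<dots> \<le> (1 - t) * norm w + t * norm (b *\<^sub>R v + w)"
    using t by (intro norm_triangle_le add_mono) simp_all
  also have "\<dots> \<le> norm w"
    using t b_le by (simp add: mult_left_mono algebra_simps)
  finally show False using assms(3) by simp
qed

definition visible_arc :: "complex set \<Rightarrow> (complex \<Rightarrow> nat) \<Rightarrow> real \<Rightarrow> complex \<Rightarrow> real set" where
  "visible_arc P f \<epsilon> p =
     {t \<in> {0..<2*pi}. \<forall>q\<in>P. f q < f p \<longrightarrow> 1 < cmod (of_real \<epsilon> * (p - q) + cis t)}"

lemma vis_scale_pts:
  assumes "0 < \<epsilon>"
  shows "vis (scale_pts \<epsilon> P) (scale_order \<epsilon> f) = (\<Sum>p\<in>P. measure lborel (visible_arc P f \<epsilon> p))"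
proof -
  have inj: "inj_on (\<lambda>p. of_real \<epsilon> * p) P"
    using assms by (auto intro: inj_onI)
  have order: "scale_order \<epsilon> f (of_real \<epsilon> * q) = f q" for q
    using assms by (simp add: scale_order_def)
  have dist: "dist (of_real \<epsilon> * q) (of_real \<epsilon> * p + cis t) = cmod (of_real \<epsilon> * (p - q) + cis t)"
    for p q t
    by (simp add: dist_norm algebra_simps norm_minus_commute)
  have "{t \<in> {0..<2*pi}. visible (scale_pts \<epsilon> P) (scale_order \<epsilon> f) (of_real \<epsilon> * p) (of_real \<epsilon> * p + cis t)}
      = visible_arc P f \<epsilon> p" for p
    unfolding visible_arc_def visible_def scale_pts_def
    by (auto simp: order dist mem_cball not_le)
  then show ?thesis
    unfolding vis_def scale_pts_def[of \<epsilon> P] by (simp add: sum.reindex[OF inj])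
qed

lemma visible_arc_mono:
  assumes "0 < a" "a \<le> b"
  shows "visible_arc P f a p \<subseteq> visible_arc P f b p"
proof -
  have "1 < cmod (of_real b * v + cis t)" if "1 < cmod (of_real a * v + cis t)" for v t
    using norm_scaleR_add_gt_mono[OF assms, of "cis t" v] that
    by (simp add: scaleR_conv_of_real)
  then show ?thesis
    unfolding visible_arc_def by blast
qed

lemma visible_arc_sets:
  assumes "finite P"
  shows "visible_arc P f \<epsilon> p \<in> sets lborel"
proof -
  let ?U = "\<Inter>q\<in>{q\<in>P. f q < f p}. {t. 1 < cmod (of_real \<epsilon> * (p - q) + cis t)}"
  have "open ?U"
    using assms by (intro open_INT ballI open_Collect_less continuous_intros) auto
  moreover have "visible_arc P f \<epsilon> p = {0..<2*pi} \<inter> ?U"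
    unfolding visible_arc_def by blast
  ultimately show ?thesis
    by (simp add: sets.Int borel_open)
qed

lemma measure_visible_arc_mono:
  assumes "finite P" "0 < a" "a \<le> b"
  shows "measure lborel (visible_arc P f a p) \<le> measure lborel (visible_arc P f b p)"
proof (rule measure_mono_fmeasurable)
  show "visible_arc P f a p \<subseteq> visible_arc P f b p"
    using assms(2,3) by (rule visible_arc_mono)
  show "visible_arc P f a p \<in> sets lborel"
    using assms(1) by (rule visible_arc_sets)
  show "visible_arc P f b p \<in> fmeasurable lborel"
    by (rule fmeasurableI2[OF fmeasurable_compact[OF compact_Icc[of 0 "2*pi"]] _ visible_arc_sets[OF assms(1)]])
      (auto simp: visible_arc_def)
qed

lemma vis_scale_pts_mono:
  assumes "finite P" "0 < a" "a \<le> b"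
  shows "vis (scale_pts a P) (scale_order a f) \<le> vis (scale_pts b P) (scale_order b f)"
  using assms by (simp add: vis_scale_pts sum_mono measure_visible_arc_mono)

theorem lemma1:
  fixes P :: "complex set" and f :: "complex \<Rightarrow> nat"
  assumes "finite P" and "stacking_order P f"
  shows "\<exists>L. ((\<lambda>\<epsilon>. vis (scale_pts \<epsilon> P) (scale_order \<epsilon> f)) \<longlongrightarrow> L) (at_right 0)
             \<and> vis P f \<ge> L"
proof -
  define g where "g \<epsilon> = vis (scale_pts \<epsilon> P) (scale_order \<epsilon> f)" for \<epsilon>
  have g_mono: "g a \<le> g b" if "0 < a" "a \<le> b" for a b
    unfolding g_def using assms(1) that by (rule vis_scale_pts_mono)
  have g_nonneg: "0 \<le> g \<epsilon>" if "0 < \<epsilon>" for \<epsilon>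
    unfolding g_def using that by (simp add: vis_scale_pts sum_nonneg)
  have "(g \<longlongrightarrow> Inf (g ` {0<..})) (at_right 0)"
    using Lim_right_bound[of UNIV 0 g 0] g_mono g_nonneg by simp
  moreover have "Inf (g ` {0<..}) \<le> g 1"
    using g_nonneg by (intro cInf_lower bdd_belowI2) auto
  moreover have "g 1 = vis P f"
    by (simp add: g_def scale_pts_def scale_order_def)
  ultimately show ?thesis
    unfolding g_def by auto
qed

end
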